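(* Let $O_1,O_2$ be two non-projective ovoids of $S_3(3)$ such that $O_1\cap O_2$ consists of exactly four points which are pairwise at distance $3$ (i.e. differ in all three coordinates). Then the graph whose vertex set is the symmetric difference $O_1\,\triangle\,O_2$ and in which two vertices are adjacent iff they are collinear in $S_3(3)$ is isomorphic to the Nauru graph (the generalized Petersen graph $G(12,5)$).
   Context: Let $L=\mathrm{PG}(1,3)$, a set of $4$ points. The Segre variety $S_3(3)$ has point set $L^3$, and its lines are the $4$-element sets obtained by fixing two coordinates and letting the third run over $L$; two points are collinear if they differ in exactly one coordinate, and the distance between two points is the number of coordinates in which they differ. An ovoid is a set of points meeting every line in exactly one point. With $V=\mathrm{GF}(3)^2$, the Segre embedding sends $([x_1],[x_2],[x_3])$ to $[x_1\otimes x_2\otimes x_3]\in\mathrm{PG}(7,3)=\mathbb{P}(V^{\otimes3})$; an ovoid is non-projective if it is not the set of points whose images lie in a hyperplane of $\mathrm{PG}(7,3)$. *)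

theory Defs
  imports Main "HOL-Library.Numeral_Type"
begin

text \<open>GF(3) is the numeral type 3 (integers mod 3, a commutative ring which is the field GF(3)).
Vectors of V = GF(3)^2 are pairs; coordinate index is bool (False = first, True = second).\<close>

type_synonym gf3 = "3"
type_synonym vec2 = "gf3 \<times> gf3"

definition comp :: "vec2 \<Rightarrow> bool \<Rightarrow> gf3" where
  "comp v b = (if b then snd v else fst v)"

text \<open>PG(1,3): the 1-dimensional subspaces of GF(3)^2, each represented by its unique
normalized spanning vector (first nonzero coordinate equal to 1).\<close>
definition PG13 :: "vec2 set" where
  "PG13 = {v. v \<noteq> (0,0) \<and> (fst v = 0 \<longrightarrow> snd v = 1) \<and> (fst v \<noteq> 0 \<longrightarrow> fst v = 1)}"

type_synonym spt = "vec2 \<times> vec2 \<times> vec2"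

definition segre_points :: "spt set" where
  "segre_points = PG13 \<times> PG13 \<times> PG13"

definition segre_lines :: "spt set set" where
  "segre_lines =
     {{(x, b, c) | x. x \<in> PG13} | b c. b \<in> PG13 \<and> c \<in> PG13} \<union>
     {{(a, x, c) | x. x \<in> PG13} | a c. a \<in> PG13 \<and> c \<in> PG13} \<union>
     {{(a, b, x) | x. x \<in> PG13} | a b. a \<in> PG13 \<and> b \<in> PG13}"

definition sdist :: "spt \<Rightarrow> spt \<Rightarrow> nat" where
  "sdist p q = (case p of (a1, a2, a3) \<Rightarrow> case q of (b1, b2, b3) \<Rightarrow>
      (if a1 = b1 then 0 else 1) + (if a2 = b2 then 0 else 1) + (if a3 = b3 then 0 else 1))"

definition collinear :: "spt \<Rightarrow> spt \<Rightarrow> bool" where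
  "collinear p q \<longleftrightarrow> sdist p q = 1"

definition ovoid :: "spt set \<Rightarrow> bool" where
  "ovoid S \<longleftrightarrow> S \<subseteq> segre_points \<and> (\<forall>l \<in> segre_lines. card (S \<inter> l) = 1)"

text \<open>Value of the linear functional with coefficients c on the Segre image x1 \<otimes> x2 \<otimes> x3.\<close>
definition segre_form :: "(bool \<Rightarrow> bool \<Rightarrow> bool \<Rightarrow> gf3) \<Rightarrow> spt \<Rightarrow> gf3" where
  "segre_form c p = (case p of (x1, x2, x3) \<Rightarrow>
     (\<Sum>i\<in>UNIV. \<Sum>j\<in>UNIV. \<Sum>k\<in>UNIV. c i j k * comp x1 i * comp x2 j * comp x3 k))"

text \<open>Projective: the set of points whose Segre image lies in some hyperplane of PG(7,3).\<close>
definition projective_ovoid :: "spt set \<Rightarrow> bool" where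
  "projective_ovoid S \<longleftrightarrow>
     (\<exists>c. (\<exists>i j k. c i j k \<noteq> 0) \<and> S = {p \<in> segre_points. segre_form c p = 0})"

text \<open>Generalized Petersen graph G(n,k): vertices (False,i) = u_i and (True,i) = v_i, i < n;
edges u_i u_{i+1}, u_i v_i, v_i v_{i+k} (indices mod n).\<close>
definition gp_vertices :: "nat \<Rightarrow> (bool \<times> nat) set" where
  "gp_vertices n = UNIV \<times> {..<n}"

definition gp_adj :: "nat \<Rightarrow> nat \<Rightarrow> bool \<times> nat \<Rightarrow> bool \<times> nat \<Rightarrow> bool" where
  "gp_adj n k x y \<longleftrightarrow>
     (case (x, y) of
       ((False, i), (False, j)) \<Rightarrow> j = (i + 1) mod n \<or> i = (j + 1) mod n
     | ((True, i), (True, j)) \<Rightarrow> j = (i + k) mod n \<or> i = (j + k) mod n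
     | ((_, i), (_, j)) \<Rightarrow> i = j)"

definition nauru_vertices :: "(bool \<times> nat) set" where
  "nauru_vertices = gp_vertices 12"

definition nauru_adj :: "bool \<times> nat \<Rightarrow> bool \<times> nat \<Rightarrow> bool" where
  "nauru_adj = gp_adj 12 5"

end

theory Submission
  imports Defs
begin

(* An ovoid of S_3(3) is a Latin square of order 4, read as the set of its (row, column, symbol)
   triples: every line of L^3 meets it exactly once.  Relabelling the three coordinates
   independently preserves Latin squares and the distance.  The four common points of O1 and O2
   differ pairwise in every coordinate, so one relabelling moves them to the diagonal points
   (i, i, i), i < 4, of both squares at once.  There are exactly two idempotent Latin squares of
   order 4, and O1 <> O2 as they share only 4 of their 16 points, so they become these two
   squares.  Their symmetric difference consists of the 24 triples of distinct symbols, i.e. of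
   the permutations of {0, 1, 2, 3}, two of them being collinear iff they differ by swapping one
   of the first three symbols with the fourth.  This Cayley graph of S_4 is the Nauru graph,
   which is checked on an explicit labelling. *)

section \<open>Latin squares as sets of triples\<close>

fun hamming :: "'a \<times> 'a \<times> 'a \<Rightarrow> 'a \<times> 'a \<times> 'a \<Rightarrow> nat" where
  "hamming (a, b, c) (a', b', c') = of_bool (a \<noteq> a') + of_bool (b \<noteq> b') + of_bool (c \<noteq> c')"

lemma hamming_eq_3_iff:
  "hamming p q = 3 \<longleftrightarrow> fst p \<noteq> fst q \<and> fst (snd p) \<noteq> fst (snd q) \<and> snd (snd p) \<noteq> snd (snd q)"
  by (cases p; cases q) auto

lemma hamming_le_1_iff:
  "hamming (a, b, c) (a', b', c') \<le> 1 \<longleftrightarrow> (b = b' \<and> c = c') \<or> (a = a' \<and> c = c') \<or> (a = a' \<and> b = b')"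
  by auto

lemma hamming_map_prod:
  assumes "inj_on f A" "inj_on g B" "inj_on h C" "p \<in> A \<times> B \<times> C" "q \<in> A \<times> B \<times> C"
  shows "hamming (map_prod f (map_prod g h) p) (map_prod f (map_prod g h) q) = hamming p q"
  using assms by (auto simp: inj_on_eq_iff)

definition latin_square :: "'a set \<Rightarrow> ('a \<times> 'a \<times> 'a) set \<Rightarrow> bool" where
  "latin_square L S \<longleftrightarrow> S \<subseteq> L \<times> L \<times> L \<and>
     (\<forall>b\<in>L. \<forall>c\<in>L. \<exists>!a. (a, b, c) \<in> S) \<and>
     (\<forall>a\<in>L. \<forall>c\<in>L. \<exists>!b. (a, b, c) \<in> S) \<and>
     (\<forall>a\<in>L. \<forall>b\<in>L. \<exists>!c. (a, b, c) \<in> S)"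

lemma latin_square_unique:
  assumes "latin_square L S"
  shows "(a, b, c) \<in> S \<Longrightarrow> (a', b, c) \<in> S \<Longrightarrow> a = a'"
    and "(a, b, c) \<in> S \<Longrightarrow> (a, b', c) \<in> S \<Longrightarrow> b = b'"
    and "(a, b, c) \<in> S \<Longrightarrow> (a, b, c') \<in> S \<Longrightarrow> c = c'"
  using assms unfolding latin_square_def by blast+

lemma latin_square_exists:
  assumes "latin_square L S"
  shows "b \<in> L \<Longrightarrow> c \<in> L \<Longrightarrow> \<exists>a. (a, b, c) \<in> S"
    and "a \<in> L \<Longrightarrow> c \<in> L \<Longrightarrow> \<exists>b. (a, b, c) \<in> S"
    and "a \<in> L \<Longrightarrow> b \<in> L \<Longrightarrow> \<exists>c. (a, b, c) \<in> S"
  using assms unfolding latin_square_def by (meson ex1_implies_ex)+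

lemma latin_square_hamming:
  assumes "latin_square L S" "p \<in> S" "q \<in> S" "hamming p q \<le> 1"
  shows "p = q"
proof -
  obtain a b c a' b' c' where pq: "p = (a, b, c)" "q = (a', b', c')"
    by (cases p; cases q)
  from assms(4) have "(b = b' \<and> c = c') \<or> (a = a' \<and> c = c') \<or> (a = a' \<and> b = b')"
    unfolding pq hamming_le_1_iff .
  then show ?thesis
    using assms(2,3) latin_square_unique[OF assms(1)] unfolding pq by auto
qed

lemma latin_squareI:
  assumes "S \<subseteq> L \<times> L \<times> L"
    and dist: "\<And>p q. p \<in> S \<Longrightarrow> q \<in> S \<Longrightarrow> hamming p q \<le> 1 \<Longrightarrow> p = q"
    and "\<And>b c. b \<in> L \<Longrightarrow> c \<in> L \<Longrightarrow> \<exists>a. (a, b, c) \<in> S"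
    and "\<And>a c. a \<in> L \<Longrightarrow> c \<in> L \<Longrightarrow> \<exists>b. (a, b, c) \<in> S"
    and "\<And>a b. a \<in> L \<Longrightarrow> b \<in> L \<Longrightarrow> \<exists>c. (a, b, c) \<in> S"
  shows "latin_square L S"
  unfolding latin_square_def
proof (intro conjI ballI ex_ex1I)
  show "a = a'" if "(a, b, c) \<in> S" "(a', b, c) \<in> S" for a a' b c
    using dist[OF that] by simp
  show "b = b'" if "(a, b, c) \<in> S" "(a, b', c) \<in> S" for a b b' c
    using dist[OF that] by simp
  show "c = c'" if "(a, b, c) \<in> S" "(a, b, c') \<in> S" for a b c c'
    using dist[OF that] by simp
qed (use assms(1,3-5) in auto)

lemma latin_square_image:
  assumes S: "latin_square L S"
    and f: "bij_betw f L M" and g: "bij_betw g L M" and h: "bij_betw h L M"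
  shows "latin_square M (map_prod f (map_prod g h) ` S)"
proof -
  let ?m = "map_prod f (map_prod g h)"
  have sub: "S \<subseteq> L \<times> L \<times> L"
    using S by (simp add: latin_square_def)
  have inj: "inj_on f L" "inj_on g L" "inj_on h L" and onto: "f ` L = M" "g ` L = M" "h ` L = M"
    using f g h by (auto simp: bij_betw_def)
  have point: "(f a, g b, h c) \<in> ?m ` S" if "(a, b, c) \<in> S" for a b c
    using that by (rule rev_image_eqI) simp
  show ?thesis
  proof (rule latin_squareI)
    have "?m ` S \<subseteq> ?m ` (L \<times> L \<times> L)"
      using sub by (rule image_mono)
    then show "?m ` S \<subseteq> M \<times> M \<times> M"
      by (simp add: map_prod_surj_on onto)
  next
    fix p' q' assume p': "p' \<in> ?m ` S" and q': "q' \<in> ?m ` S" and close: "hamming p' q' \<le> 1"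
    obtain p q where pq: "p' = ?m p" "p \<in> S" "q' = ?m q" "q \<in> S"
      using p' q' by (elim imageE)
    have "hamming p' q' = hamming p q"
      unfolding pq(1,3) using sub pq(2,4) by (intro hamming_map_prod[OF inj]) auto
    then show "p' = q'"
      using latin_square_hamming[OF S pq(2,4)] close pq(1,3) by simp
  next
    fix b' c' assume "b' \<in> M" "c' \<in> M"
    then obtain a b c where "b' = g b" "c' = h c" "(a, b, c) \<in> S"
      using onto latin_square_exists(1)[OF S] by blast
    then show "\<exists>a'. (a', b', c') \<in> ?m ` S"
      using point by metis
  next
    fix a' c' assume "a' \<in> M" "c' \<in> M"
    then obtain a b c where "a' = f a" "c' = h c" "(a, b, c) \<in> S"
      using onto latin_square_exists(2)[OF S] by blast
    then show "\<exists>b'. (a', b', c') \<in> ?m ` S"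
      using point by metis
  next
    fix a' b' assume "a' \<in> M" "b' \<in> M"
    then obtain a b c where "a' = f a" "b' = g b" "(a, b, c) \<in> S"
      using onto latin_square_exists(3)[OF S] by blast
    then show "\<exists>c'. (a', b', c') \<in> ?m ` S"
      using point by metis
  qed
qed

lemma card_latin_square:
  assumes "finite L" "latin_square L S"
  shows "card S = card L * card L"
proof -
  have "bij_betw (\<lambda>(a, b, c). (a, b)) S (L \<times> L)"
  proof (rule bij_betw_imageI)
    show "inj_on (\<lambda>(a, b, c). (a, b)) S"
      using latin_square_unique(3)[OF assms(2)] by (auto simp: inj_on_def)
    show "(\<lambda>(a, b, c). (a, b)) ` S = L \<times> L"
    proof
      show "(\<lambda>(a, b, c). (a, b)) ` S \<subseteq> L \<times> L"
        using assms(2) by (auto simp: latin_square_def)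
      show "L \<times> L \<subseteq> (\<lambda>(a, b, c). (a, b)) ` S"
      proof clarify
        fix a b assume "a \<in> L" "b \<in> L"
        then obtain c where "(a, b, c) \<in> S"
          using latin_square_exists(3)[OF assms(2)] by blast
        then show "(a, b) \<in> (\<lambda>(a, b, c). (a, b)) ` S"
          by (rule rev_image_eqI) simp
      qed
    qed
  qed
  then show ?thesis
    by (simp add: bij_betw_same_card card_cartesian_product)
qed

lemma bij_betw_inv_into_comp:
  assumes p: "bij_betw p I D" and "inj_on \<pi> D" "\<pi> ` D \<subseteq> L" "finite L" "card I = card L"
  shows "bij_betw (inv_into I (\<pi> \<circ> p)) L I" and "i \<in> I \<Longrightarrow> inv_into I (\<pi> \<circ> p) (\<pi> (p i)) = i"
proof -
  have inj: "inj_on (\<pi> \<circ> p) I"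
    using p assms(2) by (simp add: bij_betw_def comp_inj_on)
  moreover have "(\<pi> \<circ> p) ` I = L"
  proof (rule card_subset_eq[OF \<open>finite L\<close>])
    show "(\<pi> \<circ> p) ` I \<subseteq> L"
      using p assms(3) by (auto simp: bij_betw_def)
    show "card ((\<pi> \<circ> p) ` I) = card L"
      using card_image[OF inj] assms(5) by simp
  qed
  ultimately have "bij_betw (\<pi> \<circ> p) I L"
    unfolding bij_betw_def ..
  then show "bij_betw (inv_into I (\<pi> \<circ> p)) L I"
    by (rule bij_betw_inv_into)
  show "i \<in> I \<Longrightarrow> inv_into I (\<pi> \<circ> p) (\<pi> (p i)) = i"
    using inv_into_f_f[OF inj] by simp
qed

lemma transversal_to_diagonal:
  assumes "finite L" and D: "D \<subseteq> L \<times> L \<times> L" "card D = card L"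
    and opposite: "\<And>p q. p \<in> D \<Longrightarrow> q \<in> D \<Longrightarrow> p \<noteq> q \<Longrightarrow> hamming p q = 3"
  obtains f g h where "bij_betw f L {..<card L}" "bij_betw g L {..<card L}" "bij_betw h L {..<card L}"
    and "map_prod f (map_prod g h) ` D = (\<lambda>i. (i, i, i)) ` {..<card L}"
proof -
  let ?I = "{..<card L}"
  have "finite D"
    using finite_subset[OF D(1)] assms(1) by simp
  then obtain p where p: "bij_betw p ?I D"
    using ex_bij_betw_nat_finite[of D] D(2) by (auto simp: atLeast0LessThan)
  have coordinate: "bij_betw (inv_into ?I (\<pi> \<circ> p)) L ?I" "\<forall>i\<in>?I. inv_into ?I (\<pi> \<circ> p) (\<pi> (p i)) = i"
    if \<pi>: "\<pi> \<in> {fst, fst \<circ> snd, snd \<circ> snd}" for \<pi> :: "'a \<times> 'a \<times> 'a \<Rightarrow> 'a"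
  proof -
    have "inj_on \<pi> D"
    proof (rule inj_onI, rule ccontr)
      fix q r assume "q \<in> D" "r \<in> D" "\<pi> q = \<pi> r" "q \<noteq> r"
      then show False
        using \<pi> opposite[of q r] unfolding hamming_eq_3_iff by auto
    qed
    moreover have "\<pi> ` D \<subseteq> L"
      using \<pi> D(1) by auto
    ultimately show "bij_betw (inv_into ?I (\<pi> \<circ> p)) L ?I" "\<forall>i\<in>?I. inv_into ?I (\<pi> \<circ> p) (\<pi> (p i)) = i"
      using bij_betw_inv_into_comp[OF p _ _ assms(1)] by simp_all
  qed
  define f g h where "f = inv_into ?I (fst \<circ> p)" and "g = inv_into ?I (fst \<circ> snd \<circ> p)"
    and "h = inv_into ?I (snd \<circ> snd \<circ> p)"
  have diag: "map_prod f (map_prod g h) (p i) = (i, i, i)" if "i \<in> ?I" for i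
    using coordinate(2)[of fst] coordinate(2)[of "fst \<circ> snd"] coordinate(2)[of "snd \<circ> snd"] that
    unfolding f_def g_def h_def by (simp add: map_prod_def case_prod_beta comp_assoc)
  have D_eq: "D = p ` ?I"
    using p by (simp add: bij_betw_def)
  have "map_prod f (map_prod g h) ` D = (\<lambda>i. (i, i, i)) ` ?I"
    unfolding D_eq image_image using diag by (intro image_cong) simp_all
  moreover have "bij_betw f L ?I" "bij_betw g L ?I" "bij_betw h L ?I"
    using coordinate(1)[of fst] coordinate(1)[of "fst \<circ> snd"] coordinate(1)[of "snd \<circ> snd"]
    unfolding f_def g_def h_def by (simp_all add: comp_assoc)
  ultimately show ?thesis
    using that by blast
qed

section \<open>Ovoids of S_3(3)\<close>

lemma ex1_iff_card_eq_1: "(\<exists>!x. P x) \<longleftrightarrow> card {x. P x} = 1"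
  unfolding One_nat_def card_1_singleton_iff by (auto simp: set_eq_iff)

lemma card_line_eq_1_iff:
  assumes "S \<subseteq> L \<times> L \<times> L"
  shows "card (S \<inter> (\<lambda>x. (x, b, c)) ` L) = 1 \<longleftrightarrow> (\<exists>!a. (a, b, c) \<in> S)"
    and "card (S \<inter> (\<lambda>x. (a, x, c)) ` L) = 1 \<longleftrightarrow> (\<exists>!b. (a, b, c) \<in> S)"
    and "card (S \<inter> (\<lambda>x. (a, b, x)) ` L) = 1 \<longleftrightarrow> (\<exists>!c. (a, b, c) \<in> S)"
proof -
  have "S \<inter> (\<lambda>x. (x, b, c)) ` L = (\<lambda>x. (x, b, c)) ` {a. (a, b, c) \<in> S}"
       "S \<inter> (\<lambda>x. (a, x, c)) ` L = (\<lambda>x. (a, x, c)) ` {b. (a, b, c) \<in> S}"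
       "S \<inter> (\<lambda>x. (a, b, x)) ` L = (\<lambda>x. (a, b, x)) ` {c. (a, b, c) \<in> S}"
    using assms by auto
  then show "card (S \<inter> (\<lambda>x. (x, b, c)) ` L) = 1 \<longleftrightarrow> (\<exists>!a. (a, b, c) \<in> S)"
    and "card (S \<inter> (\<lambda>x. (a, x, c)) ` L) = 1 \<longleftrightarrow> (\<exists>!b. (a, b, c) \<in> S)"
    and "card (S \<inter> (\<lambda>x. (a, b, x)) ` L) = 1 \<longleftrightarrow> (\<exists>!c. (a, b, c) \<in> S)"
    by (simp_all add: ex1_iff_card_eq_1 card_image inj_on_def)
qed

lemma ball_Setcompr2: "(\<forall>l\<in>{f b c | b c. b \<in> A \<and> c \<in> B}. P l) \<longleftrightarrow> (\<forall>b\<in>A. \<forall>c\<in>B. P (f b c))"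
  by blast

lemma ovoid_iff_latin_square: "ovoid S \<longleftrightarrow> latin_square PG13 S"
proof (cases "S \<subseteq> PG13 \<times> PG13 \<times> PG13")
  case True
  show ?thesis
    unfolding ovoid_def latin_square_def segre_points_def segre_lines_def Setcompr_eq_image
      ball_Un ball_Setcompr2 card_line_eq_1_iff[OF True]
    by (simp only: conj_assoc)
next
  case False
  then show ?thesis
    by (simp add: ovoid_def latin_square_def segre_points_def)
qed

lemma gf3_cases: "(x::3) = 0 \<or> x = 1 \<or> x = 2"
proof (cases x)
  case (of_int z)
  then have "z = 0 \<or> z = 1 \<or> z = 2"
    by auto
  then show ?thesis
    using of_int by auto
qed

lemma PG13_eq: "PG13 = {(0, 1), (1, 0), (1, 1), (1, 2)}"
  unfolding PG13_def using gf3_cases by fastforce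

lemma card_PG13: "card PG13 = 4"
  by (simp add: PG13_eq)

lemma sdist_eq_hamming: "sdist = hamming"
  by (auto simp: sdist_def fun_eq_iff)

section \<open>The idempotent Latin squares of order 4\<close>

(* The diagonal together with the triples (a, b, c) of distinct symbols whose completion
   (a, b, c, d) is an even, resp. odd, permutation of {0, 1, 2, 3}. *)
definition idempotent_square_even :: "(nat \<times> nat \<times> nat) set" where
  "idempotent_square_even =
     {(0,0,0), (0,1,2), (0,2,3), (0,3,1), (1,0,3), (1,1,1), (1,2,0), (1,3,2),
      (2,0,1), (2,1,3), (2,2,2), (2,3,0), (3,0,2), (3,1,0), (3,2,1), (3,3,3)}"

definition idempotent_square_odd :: "(nat \<times> nat \<times> nat) set" where
  "idempotent_square_odd =
     {(0,0,0), (0,1,3), (0,2,1), (0,3,2), (1,0,2), (1,1,1), (1,2,3), (1,3,0),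
      (2,0,3), (2,1,0), (2,2,2), (2,3,1), (3,0,1), (3,1,2), (3,2,0), (3,3,3)}"

lemma all_less_4: "(\<forall>i<4::nat. P i) \<longleftrightarrow> P 0 \<and> P 1 \<and> P 2 \<and> P 3"
  by (auto simp: numeral_eq_Suc less_Suc_eq)

lemma less_4_iff: "(i::nat) < 4 \<longleftrightarrow> i = 0 \<or> i = 1 \<or> i = 2 \<or> i = 3"
  by auto

lemma idempotent_latin_table_4:
  fixes c :: "nat \<Rightarrow> nat \<Rightarrow> nat"
  assumes "\<forall>a<4. \<forall>b<4. c a b < 4"
    and "\<forall>a<4. c a a = a"
    and "\<forall>a<4. \<forall>b<4. \<forall>b'<4. c a b = c a b' \<longrightarrow> b = b'"
    and "\<forall>a<4. \<forall>a'<4. \<forall>b<4. c a b = c a' b \<longrightarrow> a = a'"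
  shows "(\<forall>a<4. \<forall>b<4. (a, b, c a b) \<in> idempotent_square_even) \<or>
         (\<forall>a<4. \<forall>b<4. (a, b, c a b) \<in> idempotent_square_odd)"
  using assms unfolding all_less_4 idempotent_square_even_def idempotent_square_odd_def
  \<comment> \<open>split the twelve off-diagonal cells one at a time; the row and column constraints
    close all but two branches\<close>
  apply (simp add: less_4_iff)
  apply (elim conjE)
  apply (erule disjE; simp)+
  done

lemma idempotent_latin_square_4:
  assumes S: "latin_square {..<4} S" and diag: "\<And>i. i < 4 \<Longrightarrow> (i, i, i) \<in> S"
  shows "S = idempotent_square_even \<or> S = idempotent_square_odd"
proof -
  define c where "c a b = (THE z. (a, b, z) \<in> S)" for a b
  have sub: "S \<subseteq> {..<4} \<times> {..<4} \<times> {..<4}"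
    using S by (simp add: latin_square_def)
  have cell: "(a, b, c a b) \<in> S" if "a < 4" "b < 4" for a b
  proof -
    have "\<exists>!z. (a, b, z) \<in> S"
      using S that by (simp add: latin_square_def)
    then show ?thesis
      unfolding c_def by (rule theI')
  qed
  have cell_eq: "c a b = z" if "(a, b, z) \<in> S" for a b z
    using that sub cell latin_square_unique(3)[OF S] by blast
  have "(\<forall>a<4. \<forall>b<4. (a, b, c a b) \<in> idempotent_square_even) \<or>
        (\<forall>a<4. \<forall>b<4. (a, b, c a b) \<in> idempotent_square_odd)"
  proof (rule idempotent_latin_table_4)
    show "\<forall>a<4. \<forall>b<4. c a b < 4"
      using cell sub by blast
    show "\<forall>a<4. c a a = a"
      using cell_eq diag by blast
    show "\<forall>a<4. \<forall>b<4. \<forall>b'<4. c a b = c a b' \<longrightarrow> b = b'"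
      using cell latin_square_unique(2)[OF S] by metis
    show "\<forall>a<4. \<forall>a'<4. \<forall>b<4. c a b = c a' b \<longrightarrow> a = a'"
      using cell latin_square_unique(1)[OF S] by metis
  qed
  then have "S \<subseteq> idempotent_square_even \<or> S \<subseteq> idempotent_square_odd"
    using sub cell_eq by blast
  moreover have "card S = card idempotent_square_even" "card S = card idempotent_square_odd"
    using card_latin_square[OF _ S]
    by (simp_all add: idempotent_square_even_def idempotent_square_odd_def)
  moreover have "finite idempotent_square_even" "finite idempotent_square_odd"
    by (simp_all add: idempotent_square_even_def idempotent_square_odd_def)
  ultimately show ?thesis
    by (metis card_subset_eq)
qed

section \<open>The Nauru graph\<close>

definition nauru_triple :: "bool \<times> nat \<Rightarrow> nat \<times> nat \<times> nat" where
  "nauru_triple v = (case v of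
     (False, i) \<Rightarrow> [(0,1,2), (0,1,3), (2,1,3), (2,0,3), (2,0,1), (3,0,1),
                   (3,2,1), (3,2,0), (1,2,0), (1,3,0), (1,3,2), (0,3,2)] ! i
   | (True, i) \<Rightarrow> [(3,1,2), (0,2,3), (2,1,0), (1,0,3), (2,3,1), (3,0,2),
                  (0,2,1), (3,1,0), (1,2,3), (2,3,0), (1,0,2), (0,3,1)] ! i)"

lemma nauru_vertices_eq: "nauru_vertices = UNIV \<times> {0,1,2,3,4,5,6,7,8,9,10,11}"
  unfolding nauru_vertices_def gp_vertices_def
  by (simp add: lessThan_nat_numeral lessThan_Suc insert_commute)

lemma inj_on_nauru_triple: "inj_on nauru_triple nauru_vertices"
  unfolding inj_on_def nauru_vertices_eq UNIV_bool by (simp add: nauru_triple_def)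

lemma nauru_triple_image:
  "nauru_triple ` nauru_vertices = sym_diff idempotent_square_even idempotent_square_odd"
  unfolding nauru_vertices_eq UNIV_bool idempotent_square_even_def idempotent_square_odd_def
  by (intro equalityI) (simp_all add: nauru_triple_def insert_Diff_if)

lemma nauru_triple_adj:
  "\<forall>u\<in>nauru_vertices. \<forall>v\<in>nauru_vertices.
     nauru_adj u v \<longleftrightarrow> hamming (nauru_triple u) (nauru_triple v) = 1"
  unfolding nauru_vertices_eq UNIV_bool
  by (simp add: nauru_adj_def gp_adj_def nauru_triple_def)

lemma nauru_labelling:
  obtains \<nu> where "bij_betw \<nu> (sym_diff idempotent_square_even idempotent_square_odd) nauru_vertices"
    and "\<And>p q. p \<in> sym_diff idempotent_square_even idempotent_square_odd \<Longrightarrow>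
      q \<in> sym_diff idempotent_square_even idempotent_square_odd \<Longrightarrow>
      hamming p q = 1 \<longleftrightarrow> nauru_adj (\<nu> p) (\<nu> q)"
proof
  let ?\<nu> = "inv_into nauru_vertices nauru_triple"
  have "bij_betw nauru_triple nauru_vertices (sym_diff idempotent_square_even idempotent_square_odd)"
    using inj_on_nauru_triple nauru_triple_image by (simp add: bij_betw_def)
  then show "bij_betw ?\<nu> (sym_diff idempotent_square_even idempotent_square_odd) nauru_vertices"
    by (rule bij_betw_inv_into)
  fix p q
  assume "p \<in> sym_diff idempotent_square_even idempotent_square_odd"
    and "q \<in> sym_diff idempotent_square_even idempotent_square_odd"
  then obtain u v where "u \<in> nauru_vertices" "v \<in> nauru_vertices" "p = nauru_triple u" "q = nauru_triple v"
    unfolding nauru_triple_image[symmetric] by blast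
  then show "hamming p q = 1 \<longleftrightarrow> nauru_adj (?\<nu> p) (?\<nu> q)"
    using nauru_triple_adj inv_into_f_f[OF inj_on_nauru_triple] by simp
qed

section \<open>Two ovoids meeting in four opposite points\<close>

lemma image_sym_diff:
  assumes "inj_on m C" "A \<subseteq> C" "B \<subseteq> C" "{m ` A, m ` B} = {X, Y}"
  shows "m ` sym_diff A B = sym_diff X Y"
proof -
  have "m ` (A - B) = m ` A - m ` B" "m ` (B - A) = m ` B - m ` A"
    by (rule inj_on_image_set_diff[OF assms(1)]; use assms(2,3) in blast)+
  then have "m ` sym_diff A B = sym_diff (m ` A) (m ` B)"
    by (simp add: image_Un)
  also have "\<dots> = sym_diff X Y"
    using assms(4) by (auto simp: doubleton_eq_iff)
  finally show ?thesis .
qed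
lemma ovoid_pair_normal_form:
  assumes O1: "ovoid O1" and O2: "ovoid O2" and meet: "card (O1 \<inter> O2) = 4"
    and opposite: "\<forall>p \<in> O1 \<inter> O2. \<forall>q \<in> O1 \<inter> O2. p \<noteq> q \<longrightarrow> sdist p q = 3"
  obtains m where "bij_betw m (sym_diff O1 O2) (sym_diff idempotent_square_even idempotent_square_odd)"
    and "\<And>p q. p \<in> sym_diff O1 O2 \<Longrightarrow> q \<in> sym_diff O1 O2 \<Longrightarrow> sdist p q = hamming (m p) (m q)"
proof -
  have L: "latin_square PG13 O1" "latin_square PG13 O2"
    using O1 O2 by (simp_all add: ovoid_iff_latin_square)
  have fin: "finite PG13"
    using card_PG13 by (simp add: card_ge_0_finite)
  have sub: "O1 \<subseteq> segre_points" "O2 \<subseteq> segre_points"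
    using L by (simp_all add: latin_square_def segre_points_def)
  obtain f g h where bij: "bij_betw f PG13 {..<4::nat}" "bij_betw g PG13 {..<4}" "bij_betw h PG13 {..<4}"
    and diag: "map_prod f (map_prod g h) ` (O1 \<inter> O2) = (\<lambda>i. (i, i, i)) ` {..<4}"
    using transversal_to_diagonal[OF fin, of "O1 \<inter> O2"] sub meet opposite
    unfolding card_PG13 segre_points_def sdist_eq_hamming by blast
  define m where "m = map_prod f (map_prod g h)"
  have inj_fgh: "inj_on f PG13" "inj_on g PG13" "inj_on h PG13"
    using bij by (simp_all add: bij_betw_def)
  have inj: "inj_on m segre_points"
    unfolding m_def segre_points_def by (intro map_prod_inj_on inj_fgh)
  have classified: "m ` S \<in> {idempotent_square_even, idempotent_square_odd}"
    if "latin_square PG13 S" "O1 \<inter> O2 \<subseteq> S" for S :: "spt set"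
  proof -
    have "latin_square {..<4} (m ` S)"
      unfolding m_def by (rule latin_square_image[OF that(1) bij])
    moreover have "(\<lambda>i. (i, i, i)) ` {..<4} \<subseteq> m ` S"
      using image_mono[OF that(2), of m] diag unfolding m_def by simp
    ultimately show ?thesis
      using idempotent_latin_square_4 by (simp add: image_subset_iff)
  qed
  have "O1 \<noteq> O2"
    using meet card_latin_square[OF fin L(1)] card_PG13 by auto
  then have "m ` O1 \<noteq> m ` O2"
    using inj sub by (simp add: inj_on_image_eq_iff)
  then have "{m ` O1, m ` O2} = {idempotent_square_even, idempotent_square_odd}"
    using classified[OF L(1) Int_lower1] classified[OF L(2) Int_lower2]
    unfolding doubleton_eq_iff insert_iff empty_iff by metis
  then have "m ` sym_diff O1 O2 = sym_diff idempotent_square_even idempotent_square_odd"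
    by (rule image_sym_diff[OF inj sub])
  moreover have sub_diff: "sym_diff O1 O2 \<subseteq> PG13 \<times> PG13 \<times> PG13"
    using sub unfolding segre_points_def by blast
  ultimately have "bij_betw m (sym_diff O1 O2) (sym_diff idempotent_square_even idempotent_square_odd)"
    using inj_on_subset[OF inj] unfolding segre_points_def by (simp add: bij_betw_def)
  moreover have "sdist p q = hamming (m p) (m q)" if "p \<in> sym_diff O1 O2" "q \<in> sym_diff O1 O2" for p q
    using hamming_map_prod[OF inj_fgh subsetD[OF sub_diff that(1)] subsetD[OF sub_diff that(2)]]
    unfolding m_def sdist_eq_hamming by simp
  ultimately show ?thesis
    by (rule that)
qed

theorem mainTheorem6:
  assumes "ovoid O1" and "ovoid O2"
    and "\<not> projective_ovoid O1" and "\<not> projective_ovoid O2"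
    and "card (O1 \<inter> O2) = 4"
    and "\<forall>p \<in> O1 \<inter> O2. \<forall>q \<in> O1 \<inter> O2. p \<noteq> q \<longrightarrow> sdist p q = 3"
  shows "\<exists>f. bij_betw f ((O1 - O2) \<union> (O2 - O1)) nauru_vertices \<and>
    (\<forall>p \<in> (O1 - O2) \<union> (O2 - O1). \<forall>q \<in> (O1 - O2) \<union> (O2 - O1).
        collinear p q \<longleftrightarrow> nauru_adj (f p) (f q))"
proof -
  obtain m where m: "bij_betw m (sym_diff O1 O2) (sym_diff idempotent_square_even idempotent_square_odd)"
    and dist: "\<And>p q. p \<in> sym_diff O1 O2 \<Longrightarrow> q \<in> sym_diff O1 O2 \<Longrightarrow> sdist p q = hamming (m p) (m q)"
    using ovoid_pair_normal_form[OF assms(1,2,5,6)] by blast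
  obtain \<nu> where \<nu>: "bij_betw \<nu> (sym_diff idempotent_square_even idempotent_square_odd) nauru_vertices"
    and adj: "\<And>p q. p \<in> sym_diff idempotent_square_even idempotent_square_odd \<Longrightarrow>
      q \<in> sym_diff idempotent_square_even idempotent_square_odd \<Longrightarrow>
      hamming p q = 1 \<longleftrightarrow> nauru_adj (\<nu> p) (\<nu> q)"
    using nauru_labelling by blast
  have "bij_betw (\<nu> \<circ> m) (sym_diff O1 O2) nauru_vertices"
    using m \<nu> by (rule bij_betw_trans)
  moreover have "collinear p q \<longleftrightarrow> nauru_adj ((\<nu> \<circ> m) p) ((\<nu> \<circ> m) q)"
    if "p \<in> sym_diff O1 O2" "q \<in> sym_diff O1 O2" for p q
    using dist[OF that] adj[OF bij_betw_apply[OF m that(1)] bij_betw_apply[OF m that(2)]]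
    unfolding collinear_def by simp
  ultimately show ?thesis
    by blast
qed

end
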